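(* Let $X,Y$ be real Banach spaces with a bilinear map $\langle\cdot,\cdot\rangle\colon X\times Y\to\mathbb{R}$ and normalized sequences $(e_j)\subset X$, $(f_j)\subset Y$ satisfying (B1)–(B5) below, and assume $(e_j)$ is $(C_u,C_s)$-subsymmetric. Let $T\colon X\to X$ be a bounded linear operator with $\delta:=\inf_j\langle Te_j,f_j\rangle>0$. For $L\in2\mathbb{N}$ and $0<\kappa<1$ define $$N=\max\Bigl(L,\ 1+\Bigl\lceil\frac{2C_d^2C_uC_s^3\|T\|^2}{\kappa^2\delta^2}\Bigr\rceil\Bigr).$$ Then for each $\mathcal{A}\subset\mathbb{N}$ with $|\mathcal{A}|=N$, $$\frac{1}{|\Omega_L^{\mathcal{A}}|}\sum_{(\mathcal{B},(\varepsilon_k))\in\Omega_L^{\mathcal{A}}}\Bigl\langle T\sum_{k\in\mathcal{B}}\varepsilon_ke_k,\sum_{k\in\mathcal{B}}\varepsilon_kf_k\Bigr\rangle\ge(1-\kappa)\delta L.$$ In particular, there exist $\mathcal{B}\subset\mathcal{A}$ with $|\mathcal{B}|=L$ and $(\varepsilon_k)\in\mathcal{E}(\mathcal{B})$ such that $\bigl\langle T\sum_{k\in\mathcal{B}}\varepsilon_ke_k,\sum_{k\in\mathcal{B}}\varepsilon_kf_k\bigr\rangle\ge(1-\kappa)\delta L$.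
   Context: Standing assumptions: (B1) if $\langle x,y\rangle=0$ for all $y\in Y$ then $x=0$; (B2) if $\langle x,y\rangle=0$ for all $x\in X$ then $y=0$; (B3) there is $C_d>0$ with $|\langle x,y\rangle|\le C_d\|x\|\|y\|$; (B4) $\langle e_j,f_k\rangle=1$ if $j=k$ and $0$ otherwise; (B5) every $x\in X$ has the unique representation $x=\sum_j\langle x,f_j\rangle e_j$ converging in $\sigma(X,Y)$, the topology generated by the seminorms $x\mapsto|\langle x,y\rangle|$, $y\in Y$. Series $\sum a_je_j$ are required to converge in $\sigma(X,Y)$. $(e_j)$ is $C_u$-unconditional if $\|\sum\gamma_ja_je_j\|\le C_u\sup_k|\gamma_k|\|\sum a_je_j\|$; $C_s$-spreading if for every increasing $(n_j)$, $C_s^{-1}\|\sum a_je_{n_j}\|\le\|\sum a_je_j\|\le C_s\|\sum a_je_{n_j}\|$; $(C_u,C_s)$-subsymmetric if both. $\mathcal{E}(\mathcal{B})=\{(\varepsilon_k)\in\{\pm1\}^{\mathcal{B}}:\sum_{k\in\mathcal{B}}\varepsilon_k=0\}$ and $\Omega_L^{\mathcal{A}}=\{(\mathcal{B},(\varepsilon_k)):\mathcal{B}\subset\mathcal{A},|\mathcal{B}|=L,(\varepsilon_k)\in\mathcal{E}(\mathcal{B})\}$. *)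

theory Defs
  imports "HOL-Analysis.Analysis"
begin

text \<open>Convergence of the series sum_j a_j e_j to x in the topology sigma(X,Y)
  induced by the pairing b: for every y, the partial sums paired with y converge
  to b x y.\<close>
definition wsums :: "('x::real_vector \<Rightarrow> 'y \<Rightarrow> real) \<Rightarrow> (nat \<Rightarrow> 'x) \<Rightarrow> (nat \<Rightarrow> real) \<Rightarrow> 'x \<Rightarrow> bool" where
  "wsums b e a x \<longleftrightarrow> (\<forall>y. (\<lambda>n. b (\<Sum>j<n. a j *\<^sub>R e j) y) \<longlonglongrightarrow> b x y)"

definition dual_pair_basis ::
  "('x::real_normed_vector \<Rightarrow> 'y::real_normed_vector \<Rightarrow> real) \<Rightarrow> real \<Rightarrow> (nat \<Rightarrow> 'x) \<Rightarrow> (nat \<Rightarrow> 'y) \<Rightarrow> bool" where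
  "dual_pair_basis b Cd e f \<longleftrightarrow>
     bilinear b \<and>
     (\<forall>j. norm (e j) = 1) \<and> (\<forall>j. norm (f j) = 1) \<and>
     (\<forall>x. (\<forall>y. b x y = 0) \<longrightarrow> x = 0) \<and>
     (\<forall>y. (\<forall>x. b x y = 0) \<longrightarrow> y = 0) \<and>
     Cd > 0 \<and> (\<forall>x y. \<bar>b x y\<bar> \<le> Cd * norm x * norm y) \<and>
     (\<forall>j k. b (e j) (f k) = (if j = k then 1 else 0)) \<and>
     (\<forall>x. wsums b e (\<lambda>j. b x (f j)) x \<and>
          (\<forall>a. wsums b e a x \<longrightarrow> a = (\<lambda>j. b x (f j))))"

definition unconditional ::
  "('x::real_normed_vector \<Rightarrow> 'y \<Rightarrow> real) \<Rightarrow> real \<Rightarrow> (nat \<Rightarrow> 'x) \<Rightarrow> bool" where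
  "unconditional b Cu e \<longleftrightarrow>
     (\<forall>a x \<gamma>. wsums b e a x \<and> bounded (range \<gamma>) \<longrightarrow>
        (\<exists>x'. wsums b e (\<lambda>j. \<gamma> j * a j) x' \<and>
              norm x' \<le> Cu * (SUP k. \<bar>\<gamma> k\<bar>) * norm x))"

definition spreading ::
  "('x::real_normed_vector \<Rightarrow> 'y \<Rightarrow> real) \<Rightarrow> real \<Rightarrow> (nat \<Rightarrow> 'x) \<Rightarrow> bool" where
  "spreading b Cs e \<longleftrightarrow>
     (\<forall>a n. strict_mono n \<longrightarrow>
        ((\<exists>x. wsums b e a x) \<longleftrightarrow> (\<exists>x'. wsums b (e \<circ> n) a x')) \<and>
        (\<forall>x x'. wsums b e a x \<and> wsums b (e \<circ> n) a x' \<longrightarrow>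
            norm x' / Cs \<le> norm x \<and> norm x \<le> Cs * norm x'))"

definition subsymmetric ::
  "('x::real_normed_vector \<Rightarrow> 'y \<Rightarrow> real) \<Rightarrow> real \<Rightarrow> real \<Rightarrow> (nat \<Rightarrow> 'x) \<Rightarrow> bool" where
  "subsymmetric b Cu Cs e \<longleftrightarrow> unconditional b Cu e \<and> spreading b Cs e"

text \<open>E(B): sign choices on B summing to zero; represented extensionally
  (value 0 outside B).\<close>
definition signs_E :: "nat set \<Rightarrow> (nat \<Rightarrow> real) set" where
  "signs_E B = {\<epsilon>. (\<forall>k\<in>B. \<epsilon> k = 1 \<or> \<epsilon> k = -1) \<and> (\<forall>k. k \<notin> B \<longrightarrow> \<epsilon> k = 0)
                  \<and> (\<Sum>k\<in>B. \<epsilon> k) = 0}"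

definition Omega :: "nat \<Rightarrow> nat set \<Rightarrow> (nat set \<times> (nat \<Rightarrow> real)) set" where
  "Omega L A = {(B, \<epsilon>). B \<subseteq> A \<and> card B = L \<and> \<epsilon> \<in> signs_E B}"

end

(*
  Write t j k = <T e_j, f_k>. By bilinearity the pairing for (B, eps) equals
  sum_{j,k in A} eps_j eps_k t j k. The set Omega is invariant under permutations of A,
  and every eps satisfies sum_j eps_j = 0 and sum_j eps_j^2 = L, so the sign moments
  sum_{(B,eps)} eps_j eps_k form the matrix |Omega| L (N [j = k] - 1) / (N (N - 1)).
  Hence the average equals L (N D - S) / (N (N - 1)) with D = sum_j t j j >= N delta and
  S = sum_{j,k} t j k.

  To bound S, sum the N cyclic shifts of the coefficients (<x, f_k>)_{k in A} against
  (e_k)_{k in A}: the total is (sum_k <x, f_k>) (sum_k e_k), and each shift splits into two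
  spread-out copies of partial expansions of x. Unconditionality and spreading thus give
  |sum_k <x, f_k>| ||sum_k e_k|| <= 2 N C_s^2 C_u ||x||, and x = T (sum_k e_k) yields
  |S| <= 2 N C_s^2 C_u ||T||. The choice of N makes this at most kappa delta N (N - 1), so the
  average is at least (1 - kappa) delta L and some term attains the average.
*)
theory Submission
  imports Defs
begin

lemma sum_lessThan_rotate:
  fixes g :: "nat \<Rightarrow> 'a::comm_monoid_add"
  assumes "t < N"
  shows "(\<Sum>m<N. g ((t + m) mod N)) = (\<Sum>i<N. g i)"
proof -
  have onto: "{..<N} \<subseteq> (\<lambda>m. (t + m) mod N) ` {..<N}"
  proof
    fix i assume "i \<in> {..<N}"
    then have "i = (t + (i + N - t) mod N) mod N"
      using assms by (simp add: mod_add_right_eq)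
    then show "i \<in> (\<lambda>m. (t + m) mod N) ` {..<N}"
      using assms by (intro image_eqI[where x = "(i + N - t) mod N"]) auto
  qed
  moreover have "(\<lambda>m. (t + m) mod N) ` {..<N} \<subseteq> {..<N}"
    using assms by auto
  ultimately have "bij_betw (\<lambda>m. (t + m) mod N) {..<N} {..<N}"
    unfolding bij_betw_def using finite_surj_inj[OF finite_lessThan onto] by blast
  then show ?thesis by (rule sum.reindex_bij_betw)
qed

lemma sum_lessThan_rotate_split:
  fixes m N :: nat
  assumes "m < N"
  shows "(\<Sum>t<N. h ((t + m) mod N) t) = (\<Sum>t<N - m. h (t + m) t) + (\<Sum>j<m. h j (j + (N - m)))"
proof -
  have "(\<Sum>t<N. h ((t + m) mod N) t)
      = (\<Sum>t<N - m. h ((t + m) mod N) t) + (\<Sum>t\<in>{N - m..<N}. h ((t + m) mod N) t)"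
    unfolding lessThan_atLeast0 by (rule sum.atLeastLessThan_concat[symmetric]) auto
  also have "(\<Sum>t<N - m. h ((t + m) mod N) t) = (\<Sum>t<N - m. h (t + m) t)"
    by (intro sum.cong) auto
  also have "(\<Sum>t\<in>{N - m..<N}. h ((t + m) mod N) t) = (\<Sum>j<m. h ((j + (N - m) + m) mod N) (j + (N - m)))"
    using assms sum.shift_bounds_nat_ivl[of "\<lambda>t. h ((t + m) mod N) t" 0 "N - m" m]
    by (simp add: lessThan_atLeast0)
  also have "\<dots> = (\<Sum>j<m. h j (j + (N - m)))"
    using assms by (intro sum.cong) auto
  finally show ?thesis .
qed

lemma strict_mono_on_lessThan_shift:
  fixes k :: "nat \<Rightarrow> nat"
  assumes "strict_mono_on {..<N} k" "i + r \<le> N"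
  shows "strict_mono_on {..<r} (\<lambda>t. k (t + i))"
proof (rule strict_mono_onI)
  fix s t assume "s \<in> {..<r}" "t \<in> {..<r}" "s < t"
  with assms show "k (s + i) < k (t + i)"
    by (simp add: strict_mono_on_def)
qed

lemma bilinear_linear_sum_scaleR:
  assumes "bilinear b" "linear T"
  shows "b (T (\<Sum>k\<in>A. c k *\<^sub>R x k)) (\<Sum>k\<in>A. c k *\<^sub>R y k)
    = (\<Sum>j\<in>A. \<Sum>k\<in>A. c j * c k * b (T (x j)) (y k))"
proof -
  have "T (\<Sum>k\<in>A. c k *\<^sub>R x k) = (\<Sum>j\<in>A. c j *\<^sub>R T (x j))"
    using assms(2) by (simp add: linear_sum linear_scale)
  then have "b (T (\<Sum>k\<in>A. c k *\<^sub>R x k)) (\<Sum>k\<in>A. c k *\<^sub>R y k)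
      = (\<Sum>(j, k)\<in>A \<times> A. b (c j *\<^sub>R T (x j)) (c k *\<^sub>R y k))"
    by (simp add: bilinear_sum[OF assms(1)])
  also have "\<dots> = (\<Sum>(j, k)\<in>A \<times> A. c j * c k * b (T (x j)) (y k))"
    by (simp add: bilinear_lmul[OF assms(1)] bilinear_rmul[OF assms(1)] mult_ac)
  finally show ?thesis
    by (simp add: sum.cartesian_product)
qed

lemma wsums_sum_lessThan:
  assumes "\<And>j. j \<ge> r \<Longrightarrow> a j = 0"
  shows "wsums b e a (\<Sum>j<r. a j *\<^sub>R e j)"
  unfolding wsums_def
proof
  fix y
  have "\<forall>\<^sub>F n in sequentially. (\<Sum>j<n. a j *\<^sub>R e j) = (\<Sum>j<r. a j *\<^sub>R e j)"
    using assms by (intro eventually_sequentiallyI[of r] sum.mono_neutral_right) auto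
  then have "\<forall>\<^sub>F n in sequentially. b (\<Sum>j<n. a j *\<^sub>R e j) y = b (\<Sum>j<r. a j *\<^sub>R e j) y"
    by eventually_elim simp
  then show "(\<lambda>n. b (\<Sum>j<n. a j *\<^sub>R e j) y) \<longlonglongrightarrow> b (\<Sum>j<r. a j *\<^sub>R e j) y"
    by (rule tendsto_eventually)
qed

locale dual_basis =
  fixes b :: "'x::real_normed_vector \<Rightarrow> 'y::real_normed_vector \<Rightarrow> real"
    and Cd :: real and e :: "nat \<Rightarrow> 'x" and f :: "nat \<Rightarrow> 'y"
  assumes dual_pair_basis: "dual_pair_basis b Cd e f"
begin

lemma bilinear: "bilinear b"
  using dual_pair_basis by (simp add: dual_pair_basis_def)

lemma norm_e [simp]: "norm (e j) = 1"
  using dual_pair_basis by (simp add: dual_pair_basis_def)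

lemma norm_f [simp]: "norm (f j) = 1"
  using dual_pair_basis by (simp add: dual_pair_basis_def)

lemma biorthogonal: "b (e j) (f k) = (if j = k then 1 else 0)"
  using dual_pair_basis by (simp add: dual_pair_basis_def)

lemma abs_le: "\<bar>b x y\<bar> \<le> Cd * norm x * norm y"
  using dual_pair_basis by (simp add: dual_pair_basis_def)

lemma separating: "(\<And>y. b x y = 0) \<Longrightarrow> x = 0"
  using dual_pair_basis by (simp add: dual_pair_basis_def)

lemma wsums_expansion: "wsums b e (\<lambda>j. b x (f j)) x"
  using dual_pair_basis unfolding dual_pair_basis_def by (elim conjE) (drule spec, erule conjE)

lemma Cd_ge_1: "Cd \<ge> 1"
  using abs_le[of "e 0" "f 0"] by (simp add: biorthogonal)

lemma wsums_unique:
  assumes "wsums b e a x" "wsums b e a x'"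
  shows "x = x'"
proof -
  have "b (x - x') y = 0" for y
  proof -
    have "(\<lambda>n. b (\<Sum>j<n. a j *\<^sub>R e j) y) \<longlonglongrightarrow> b x y"
      and "(\<lambda>n. b (\<Sum>j<n. a j *\<^sub>R e j) y) \<longlonglongrightarrow> b x' y"
      using assms unfolding wsums_def by blast+
    then have "b x y = b x' y" by (rule LIMSEQ_unique)
    then show ?thesis by (simp add: bilinear_lsub[OF bilinear])
  qed
  then show ?thesis
    using separating[of "x - x'"] by simp
qed

lemma abs_matrix_entry_le:
  assumes "bounded_linear T"
  shows "\<bar>b (T (e j)) (f k)\<bar> \<le> Cd * onorm T"
proof -
  have "\<bar>b (T (e j)) (f k)\<bar> \<le> Cd * norm (T (e j))"
    using abs_le[of "T (e j)" "f k"] by simp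
  also have "\<dots> \<le> Cd * onorm T"
    using onorm[OF assms, of "e j"] Cd_ge_1 by (intro mult_left_mono) auto
  finally show ?thesis .
qed

lemma sum_basis_nonzero:
  assumes "finite A" "a \<in> A"
  shows "(\<Sum>j\<in>A. e j) \<noteq> 0"
proof
  assume "(\<Sum>j\<in>A. e j) = 0"
  then have "0 = b (\<Sum>j\<in>A. e j) (f a)"
    by (simp add: bilinear_lzero[OF bilinear])
  also have "\<dots> = (\<Sum>j\<in>A. b (e j) (f a))"
    using bilinear by (intro linear_sum) (simp add: bilinear_def)
  also have "\<dots> = 1"
    using assms by (simp add: biorthogonal)
  finally show False by simp
qed

lemma INF_diag_le:
  assumes "bounded_linear T"
  shows "(INF i. b (T (e i)) (f i)) \<le> b (T (e j)) (f j)"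
proof (rule cINF_lower)
  have "- (Cd * onorm T) \<le> b (T (e i)) (f i)" for i
    using abs_matrix_entry_le[OF assms, of i i] by (simp add: abs_le_iff minus_le_iff)
  then show "bdd_below (range (\<lambda>i. b (T (e i)) (f i)))"
    by (intro bdd_belowI2)
qed simp

end

locale subsymmetric_basis = dual_basis +
  fixes Cu Cs :: real
  assumes subsymmetric: "subsymmetric b Cu Cs e"
begin

lemma spreadingD:
  assumes "strict_mono n" "wsums b e a x" "wsums b (e \<circ> n) a x'"
  shows "norm x' / Cs \<le> norm x" and "norm x \<le> Cs * norm x'"
proof -
  have "\<forall>x x'. wsums b e a x \<and> wsums b (e \<circ> n) a x' \<longrightarrow>
      norm x' / Cs \<le> norm x \<and> norm x \<le> Cs * norm x'"
    using subsymmetric assms(1) unfolding subsymmetric_def spreading_def by simp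
  with assms(2,3) show "norm x' / Cs \<le> norm x" and "norm x \<le> Cs * norm x'"
    by blast+
qed

lemma spreading_finite_sum:
  assumes n: "strict_mono_on {..<r} n"
  shows "norm (\<Sum>j<r. c j *\<^sub>R e (n j)) / Cs \<le> norm (\<Sum>j<r. c j *\<^sub>R e j)"
    and "norm (\<Sum>j<r. c j *\<^sub>R e j) \<le> Cs * norm (\<Sum>j<r. c j *\<^sub>R e (n j))"
proof -
  define M where "M = Max (n ` {..<r})"
  define n' where "n' j = (if j < r then n j else M + j)" for j
  have "strict_mono n'"
  proof (rule strict_monoI)
    fix i j :: nat assume "i < j"
    show "n' i < n' j"
    proof (cases "j < r")
      case True
      with \<open>i < j\<close> n show ?thesis by (auto simp: n'_def strict_mono_on_def)
    next
      case False
      have "n i \<le> M" if "i < r"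
        using that by (simp add: M_def)
      with False \<open>i < j\<close> show ?thesis by (auto simp: n'_def)
    qed
  qed
  moreover define a where "a j = (if j < r then c j else 0)" for j
  moreover have "wsums b e a (\<Sum>j<r. c j *\<^sub>R e j)"
    using wsums_sum_lessThan[of r a b e] by (simp add: a_def)
  moreover have "wsums b (e \<circ> n') a (\<Sum>j<r. c j *\<^sub>R e (n j))"
    using wsums_sum_lessThan[of r a b "e \<circ> n'"] by (simp add: a_def n'_def)
  ultimately show "norm (\<Sum>j<r. c j *\<^sub>R e (n j)) / Cs \<le> norm (\<Sum>j<r. c j *\<^sub>R e j)"
    and "norm (\<Sum>j<r. c j *\<^sub>R e j) \<le> Cs * norm (\<Sum>j<r. c j *\<^sub>R e (n j))"
    by (blast intro: spreadingD)+
qed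

lemma Cs_ge_1: "Cs \<ge> 1"
proof -
  have "strict_mono_on {..<1} (\<lambda>j::nat. j)"
    by (rule strict_mono_onI) simp
  from spreading_finite_sum(2)[OF this, of "\<lambda>_. 1"] show ?thesis by simp
qed

lemma norm_sum_respread_le:
  fixes r :: nat
  assumes "strict_mono_on {..<r} n" "strict_mono_on {..<r} n'"
  shows "norm (\<Sum>j<r. c j *\<^sub>R e (n' j)) \<le> Cs\<^sup>2 * norm (\<Sum>j<r. c j *\<^sub>R e (n j))"
proof -
  have "norm (\<Sum>j<r. c j *\<^sub>R e (n' j)) \<le> Cs * norm (\<Sum>j<r. c j *\<^sub>R e j)"
    using spreading_finite_sum(1)[OF assms(2)] Cs_ge_1 by (simp add: divide_le_eq mult.commute)
  also have "\<dots> \<le> Cs * (Cs * norm (\<Sum>j<r. c j *\<^sub>R e (n j)))"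
    using spreading_finite_sum(2)[OF assms(1)] Cs_ge_1 by simp
  finally show ?thesis by (simp add: power2_eq_square)
qed

lemma norm_partial_expansion_le:
  assumes "finite F"
  shows "norm (\<Sum>k\<in>F. b x (f k) *\<^sub>R e k) \<le> Cu * norm x"
proof -
  have nonempty: "norm (\<Sum>k\<in>F. b x (f k) *\<^sub>R e k) \<le> Cu * norm x"
    if F: "finite F" "F \<noteq> {}" for F
  proof -
    have "bounded (range (indicator F :: nat \<Rightarrow> real))"
      by (rule bounded_subset[of "{0, 1}"]) (auto simp: indicator_def)
    then obtain x' where x': "wsums b e (\<lambda>j. indicator F j * b x (f j)) x'"
      "norm x' \<le> Cu * (SUP k. \<bar>indicator F k :: real\<bar>) * norm x"
      using subsymmetric wsums_expansion by (force simp: subsymmetric_def unconditional_def)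
    have "(SUP k. \<bar>indicator F k :: real\<bar>) = 1"
      using F by (intro cSup_eq_maximum) (auto simp: indicator_def)
    moreover obtain r where r: "F \<subseteq> {..<r}"
      using F finite_nat_bounded by blast
    then have "(\<Sum>k\<in>F. b x (f k) *\<^sub>R e k) = (\<Sum>j<r. (indicator F j * b x (f j)) *\<^sub>R e j)"
      by (intro sum.mono_neutral_cong_left) (auto simp: indicator_def)
    moreover have "wsums b e (\<lambda>j. indicator F j * b x (f j)) (\<Sum>j<r. (indicator F j * b x (f j)) *\<^sub>R e j)"
      using r by (intro wsums_sum_lessThan) (auto simp: indicator_def)
    ultimately show ?thesis
      using x' wsums_unique by auto
  qed
  show ?thesis
  proof (cases "F = {}")
    case True
    then show ?thesis
      using nonempty[of "{0}"] norm_ge_zero[of "\<Sum>k\<in>{0}. b x (f k) *\<^sub>R e k"] by simp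
  next
    case False
    then show ?thesis using nonempty assms by blast
  qed
qed

lemma norm_respread_partial_expansion_le:
  fixes r :: nat
  assumes n: "strict_mono_on {..<r} n" and n': "strict_mono_on {..<r} n'"
  shows "norm (\<Sum>t<r. b x (f (n t)) *\<^sub>R e (n' t)) \<le> Cs\<^sup>2 * (Cu * norm x)"
proof -
  have "norm (\<Sum>t<r. b x (f (n t)) *\<^sub>R e (n' t)) \<le> Cs\<^sup>2 * norm (\<Sum>t<r. b x (f (n t)) *\<^sub>R e (n t))"
    by (rule norm_sum_respread_le[OF n n'])
  also have "(\<Sum>t<r. b x (f (n t)) *\<^sub>R e (n t)) = (\<Sum>k\<in>n ` {..<r}. b x (f k) *\<^sub>R e k)"
    using sum.reindex[OF strict_mono_on_imp_inj_on[OF n], of "\<lambda>k. b x (f k) *\<^sub>R e k"] by simp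
  also have "Cs\<^sup>2 * norm \<dots> \<le> Cs\<^sup>2 * (Cu * norm x)"
    by (intro mult_left_mono norm_partial_expansion_le) auto
  finally show ?thesis .
qed

lemma abs_sum_coeffs_times_norm_sum_le:
  assumes "finite A"
  shows "\<bar>\<Sum>j\<in>A. b x (f j)\<bar> * norm (\<Sum>j\<in>A. e j) \<le> 2 * real (card A) * Cs\<^sup>2 * Cu * norm x"
proof -
  define N where "N = card A"
  define k where "k = enumerate A"
  have bij: "bij_betw k {..<N} A"
    unfolding k_def N_def using finite_bij_enumerate[OF assms] .
  have mono: "strict_mono_on {..<N} k"
    unfolding k_def N_def using finite_enumerate_mono[OF _ assms] by (auto simp: strict_mono_on_def)
  define a where "a i = b x (f (k i))" for i
  define w where "w m = (\<Sum>t<N. a ((t + m) mod N) *\<^sub>R e (k t))" for m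
  have "(\<Sum>m<N. w m) = (\<Sum>t<N. (\<Sum>m<N. a ((t + m) mod N)) *\<^sub>R e (k t))"
    unfolding w_def scaleR_sum_left by (rule sum.swap)
  also have "\<dots> = (\<Sum>t<N. (\<Sum>i<N. a i) *\<^sub>R e (k t))"
    by (intro sum.cong refl) (simp add: sum_lessThan_rotate)
  also have "\<dots> = (\<Sum>j\<in>A. b x (f j)) *\<^sub>R (\<Sum>j\<in>A. e j)"
    unfolding a_def scaleR_sum_right[symmetric]
    using sum.reindex_bij_betw[OF bij, of "\<lambda>j. b x (f j)"] sum.reindex_bij_betw[OF bij, of e] by simp
  finally have sum_w: "(\<Sum>m<N. w m) = (\<Sum>j\<in>A. b x (f j)) *\<^sub>R (\<Sum>j\<in>A. e j)" .
  have norm_w: "norm (w m) \<le> 2 * (Cs\<^sup>2 * (Cu * norm x))" if m: "m < N" for m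
  proof -
    \<comment> \<open>the \<open>+ 0\<close> lets both sums match strict_mono_on_lessThan_shift\<close>
    have "w m = (\<Sum>t<N - m. b x (f (k (t + m))) *\<^sub>R e (k (t + 0)))
              + (\<Sum>j<m. b x (f (k (j + 0))) *\<^sub>R e (k (j + (N - m))))"
      unfolding w_def a_def using sum_lessThan_rotate_split[OF m] by simp
    also have "norm \<dots> \<le> Cs\<^sup>2 * (Cu * norm x) + Cs\<^sup>2 * (Cu * norm x)"
      using m by (intro norm_triangle_le add_mono norm_respread_partial_expansion_le
          strict_mono_on_lessThan_shift[OF mono]) auto
    finally show ?thesis by (simp add: mult_ac)
  qed
  have "\<bar>\<Sum>j\<in>A. b x (f j)\<bar> * norm (\<Sum>j\<in>A. e j) = norm (\<Sum>m<N. w m)"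
    by (simp add: sum_w)
  also have "\<dots> \<le> (\<Sum>m<N. 2 * (Cs\<^sup>2 * (Cu * norm x)))"
    using norm_w by (intro sum_norm_le) simp
  also have "\<dots> = 2 * real (card A) * Cs\<^sup>2 * Cu * norm x"
    by (simp add: N_def)
  finally show ?thesis .
qed

lemma Cu_ge_1: "Cu \<ge> 1"
  using norm_partial_expansion_le[of "{0}" "e 0"] by (simp add: biorthogonal)

lemma abs_sum_matrix_le:
  assumes T: "bounded_linear T" and A: "finite A"
  shows "\<bar>\<Sum>j\<in>A. \<Sum>k\<in>A. b (T (e j)) (f k)\<bar> \<le> 2 * real (card A) * Cs\<^sup>2 * Cu * onorm T"
proof (cases "A = {}")
  case False
  then obtain a where "a \<in> A" by blast
  define u where "u = (\<Sum>j\<in>A. e j)"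
  have "norm u > 0"
    using sum_basis_nonzero[OF A \<open>a \<in> A\<close>] by (simp add: u_def)
  have "(\<Sum>j\<in>A. \<Sum>k\<in>A. b (T (e j)) (f k)) = (\<Sum>k\<in>A. \<Sum>j\<in>A. b (T (e j)) (f k))"
    by (rule sum.swap)
  also have "\<dots> = (\<Sum>k\<in>A. b (T u) (f k))"
  proof (rule sum.cong[OF refl])
    fix k
    have "linear (\<lambda>x. b x (f k))"
      using bilinear by (simp add: bilinear_def)
    then show "(\<Sum>j\<in>A. b (T (e j)) (f k)) = b (T u) (f k)"
      using linear_sum[of "\<lambda>x. b x (f k)" "\<lambda>j. T (e j)" A]
      by (simp add: u_def linear_sum[OF bounded_linear.linear[OF T]])
  qed
  finally have "\<bar>\<Sum>j\<in>A. \<Sum>k\<in>A. b (T (e j)) (f k)\<bar> * norm u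
      \<le> 2 * real (card A) * Cs\<^sup>2 * Cu * norm (T u)"
    using abs_sum_coeffs_times_norm_sum_le[OF A, of "T u"] by (simp add: u_def)
  also have "\<dots> \<le> 2 * real (card A) * Cs\<^sup>2 * Cu * (onorm T * norm u)"
    using onorm[OF T] Cu_ge_1 by (intro mult_left_mono) auto
  finally show ?thesis
    using \<open>norm u > 0\<close> by (simp add: mult.assoc)
qed simp

end

lemma Omega_memD:
  assumes "(B, \<epsilon>) \<in> Omega L A"
  shows "B \<subseteq> A" "card B = L" "\<And>k. k \<in> B \<Longrightarrow> \<epsilon> k = 1 \<or> \<epsilon> k = -1"
    "\<And>k. k \<notin> B \<Longrightarrow> \<epsilon> k = 0" "(\<Sum>k\<in>B. \<epsilon> k) = 0"
  using assms by (auto simp: Omega_def signs_E_def)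

lemma finite_Omega:
  assumes "finite A"
  shows "finite (Omega L A)"
proof (rule finite_subset)
  show "Omega L A \<subseteq> Pow A \<times> {\<epsilon>. \<forall>k. (k \<in> A \<longrightarrow> \<epsilon> k \<in> {-1, 0, 1}) \<and> (k \<notin> A \<longrightarrow> \<epsilon> k = 0)}"
    by (auto simp: Omega_def signs_E_def)
  show "finite (Pow A \<times> {\<epsilon>. \<forall>k. (k \<in> A \<longrightarrow> \<epsilon> k \<in> {-1, 0, 1::real}) \<and> (k \<notin> A \<longrightarrow> \<epsilon> k = 0)})"
    using assms by (intro finite_cartesian_product finite_set_of_finite_funs) auto
qed

lemma Omega_nonempty:
  assumes "finite A" "L \<le> card A" "even L"
  shows "Omega L A \<noteq> {}"
proof -
  obtain B where B: "B \<subseteq> A" "card B = L"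
    using obtain_subset_with_card_n[OF assms(2)] by blast
  moreover have "L div 2 \<le> card B"
    using B(2) by simp
  ultimately obtain B\<^sub>1 where B\<^sub>1: "B\<^sub>1 \<subseteq> B" "card B\<^sub>1 = L div 2"
    by (meson obtain_subset_with_card_n)
  have fin: "finite B" using B assms(1) finite_subset by blast
  have card_rest: "card (B - B\<^sub>1) = L div 2"
    using B B\<^sub>1 fin assms(3) by (simp add: card_Diff_subset finite_subset) presburger
  define \<epsilon> where "\<epsilon> k = (if k \<in> B\<^sub>1 then 1 else if k \<in> B then -1 else (0::real))" for k
  have "(\<Sum>k\<in>B. \<epsilon> k) = (\<Sum>k\<in>B - B\<^sub>1. \<epsilon> k) + (\<Sum>k\<in>B\<^sub>1. \<epsilon> k)"
    using B\<^sub>1 fin by (simp add: sum.subset_diff)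
  also have "\<dots> = 0"
    using B\<^sub>1(2) card_rest by (simp add: \<epsilon>_def)
  finally have "(B, \<epsilon>) \<in> Omega L A"
    using B B\<^sub>1 by (auto simp: Omega_def signs_E_def \<epsilon>_def)
  then show ?thesis by blast
qed

lemma Omega_transpose:
  assumes "a \<in> A" "c \<in> A" "(B, \<epsilon>) \<in> Omega L A"
  shows "(Transposition.transpose a c ` B, \<epsilon> \<circ> Transposition.transpose a c) \<in> Omega L A"
proof -
  let ?\<tau> = "Transposition.transpose a c"
  note B = Omega_memD[OF assms(3)]
  have "?\<tau> ` B \<subseteq> A"
    using B(1) assms(1,2) by (auto simp: Transposition.transpose_def)
  moreover have "card (?\<tau> ` B) = L"
    using B(2) by (simp add: card_image)
  moreover have "(\<Sum>k\<in>?\<tau> ` B. (\<epsilon> \<circ> ?\<tau>) k) = 0"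
    using B(5) by (simp add: sum.reindex comp_def)
  ultimately show ?thesis
    using B(3,4) by (auto simp: Omega_def signs_E_def in_transpose_image_iff)
qed

definition sign_moment :: "nat \<Rightarrow> nat set \<Rightarrow> nat \<Rightarrow> nat \<Rightarrow> real" where
  "sign_moment L A j k = (\<Sum>(B, \<epsilon>)\<in>Omega L A. \<epsilon> j * \<epsilon> k)"

lemma sign_moment_transpose:
  assumes "a \<in> A" "c \<in> A"
  shows "sign_moment L A (Transposition.transpose a c j) (Transposition.transpose a c k) = sign_moment L A j k"
proof -
  let ?\<tau> = "Transposition.transpose a c"
  define \<Phi> where "\<Phi> p = (?\<tau> ` fst p, snd p \<circ> ?\<tau>)" for p :: "nat set \<times> (nat \<Rightarrow> real)"
  have \<Phi>\<Phi>: "\<Phi> (\<Phi> p) = p" for p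
    by (cases p) (simp add: \<Phi>_def image_comp comp_def)
  have \<Phi>_Omega: "\<Phi> p \<in> Omega L A" if "p \<in> Omega L A" for p
    using Omega_transpose[OF assms, of "fst p" "snd p"] that by (simp add: \<Phi>_def)
  have "sign_moment L A j k = (\<Sum>p\<in>Omega L A. snd (\<Phi> p) (?\<tau> j) * snd (\<Phi> p) (?\<tau> k))"
    by (simp add: sign_moment_def case_prod_beta \<Phi>_def)
  also have "\<dots> = (\<Sum>p\<in>Omega L A. snd p (?\<tau> j) * snd p (?\<tau> k))"
    by (rule sum.reindex_bij_witness[of _ \<Phi> \<Phi>]) (auto simp: \<Phi>\<Phi> \<Phi>_Omega)
  finally show ?thesis
    by (simp add: sign_moment_def case_prod_beta)
qed

lemma Omega_sum_extend:
  fixes v :: "nat \<Rightarrow> 'a::real_vector"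
  assumes "(B, \<epsilon>) \<in> Omega L A" "finite A"
  shows "(\<Sum>k\<in>B. \<epsilon> k *\<^sub>R v k) = (\<Sum>k\<in>A. \<epsilon> k *\<^sub>R v k)"
  using Omega_memD[OF assms(1)] assms(2) by (intro sum.mono_neutral_left) auto

lemma Omega_sum_square:
  assumes "(B, \<epsilon>) \<in> Omega L A" "finite A"
  shows "(\<Sum>k\<in>A. \<epsilon> k * \<epsilon> k) = real L"
proof -
  note B = Omega_memD[OF assms(1)]
  have "(\<Sum>k\<in>A. \<epsilon> k * \<epsilon> k) = (\<Sum>k\<in>B. \<epsilon> k * \<epsilon> k)"
    using Omega_sum_extend[OF assms, of \<epsilon>] by simp
  also have "\<dots> = (\<Sum>k\<in>B. 1)"
  proof (rule sum.cong)
    show "\<epsilon> k * \<epsilon> k = 1" if "k \<in> B" for k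
      using B(3)[OF that] by auto
  qed simp
  finally show ?thesis
    using B(2) by simp
qed

lemma Omega_sum:
  assumes "(B, \<epsilon>) \<in> Omega L A" "finite A"
  shows "(\<Sum>k\<in>A. \<epsilon> k) = 0"
  using Omega_sum_extend[OF assms, of "\<lambda>_. 1::real"] Omega_memD(5)[OF assms(1)] by simp

lemma sign_moment_constant:
  assumes "a \<in> A" "a' \<in> A" "a \<noteq> a'" "j \<in> A" "k \<in> A"
  shows "sign_moment L A j k = (if j = k then sign_moment L A a a else sign_moment L A a a')"
proof (cases "j = k")
  case True
  then show ?thesis
    using sign_moment_transpose[OF assms(1,4), of L a a] by simp
next
  case False
  define k' where "k' = Transposition.transpose a j a'"
  have "k' \<in> A" "k' \<noteq> j"
    using assms by (auto simp: k'_def Transposition.transpose_def)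
  have "sign_moment L A a a' = sign_moment L A j k'"
    using sign_moment_transpose[OF assms(1,4), of L a a'] by (simp add: k'_def)
  also have "\<dots> = sign_moment L A j k"
    using sign_moment_transpose[OF \<open>k' \<in> A\<close> assms(5), of L j k'] \<open>k' \<noteq> j\<close> False by simp
  finally show ?thesis
    using False by simp
qed

lemma sum_sign_moment_diag:
  assumes "finite A"
  shows "(\<Sum>j\<in>A. sign_moment L A j j) = real (card (Omega L A)) * real L"
proof -
  have "(\<Sum>j\<in>A. sign_moment L A j j) = (\<Sum>p\<in>Omega L A. \<Sum>j\<in>A. snd p j * snd p j)"
    unfolding sign_moment_def case_prod_beta by (rule sum.swap)
  also have "\<dots> = (\<Sum>p\<in>Omega L A. real L)"
    using Omega_sum_square[where L = L, OF _ assms] by (intro sum.cong refl) (metis prod.collapse)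
  finally show ?thesis
    by simp
qed

lemma sum_sign_moment:
  assumes "finite A"
  shows "(\<Sum>j\<in>A. \<Sum>k\<in>A. sign_moment L A j k) = 0"
proof -
  have "(\<Sum>j\<in>A. \<Sum>k\<in>A. sign_moment L A j k) = (\<Sum>j\<in>A. \<Sum>p\<in>Omega L A. \<Sum>k\<in>A. snd p j * snd p k)"
    unfolding sign_moment_def case_prod_beta by (intro sum.cong refl) (rule sum.swap)
  also have "\<dots> = (\<Sum>p\<in>Omega L A. (\<Sum>j\<in>A. snd p j) * (\<Sum>k\<in>A. snd p k))"
    unfolding sum_product by (rule sum.swap)
  also have "\<dots> = 0"
    using Omega_sum[where L = L, OF _ assms] by (intro sum.neutral) (metis prod.collapse mult_zero_left)
  finally show ?thesis .
qed

lemma sign_moment_eq: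
  assumes "finite A" "card A \<ge> 2" "j \<in> A" "k \<in> A"
  shows "sign_moment L A j k = real (card (Omega L A)) * real L / (real (card A) * (real (card A) - 1))
      * (real (card A) * of_bool (j = k) - 1)"
proof -
  let ?N = "real (card A)"
  have "\<not> card A \<le> Suc 0"
    using assms(2) by simp
  then obtain a a' where a: "a \<in> A" "a' \<in> A" "a \<noteq> a'"
    using card_le_Suc0_iff_eq[OF assms(1)] by blast
  define d where "d = sign_moment L A a a"
  define c where "c = sign_moment L A a a'"
  note moment = sign_moment_constant[OF a, of _ _ L, folded d_def c_def]
  have row: "(\<Sum>k\<in>A. sign_moment L A j k) = d + (?N - 1) * c" if "j \<in> A" for j
  proof -
    have "(\<Sum>k\<in>A. sign_moment L A j k) = sign_moment L A j j + (\<Sum>k\<in>A - {j}. sign_moment L A j k)"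
      using assms(1) that by (simp add: sum.remove)
    also have "\<dots> = d + (\<Sum>k\<in>A - {j}. c)"
      using that by (simp add: moment)
    finally show ?thesis
      using assms(1,2) that by (simp add: of_nat_diff)
  qed
  have "?N * d = real (card (Omega L A)) * real L"
    using sum_sign_moment_diag[OF assms(1), of L] moment by simp
  moreover have "?N * (d + (?N - 1) * c) = 0"
    using sum_sign_moment[OF assms(1), of L] row by simp
  moreover have "?N > 1"
    using assms(2) by simp
  ultimately show ?thesis
    using moment[OF assms(3,4)] by (auto simp: field_simps)
qed

lemma sum_Omega_quadratic_form:
  fixes t :: "nat \<Rightarrow> nat \<Rightarrow> real"
  assumes "finite A" "card A \<ge> 2"
  shows "(\<Sum>(B, \<epsilon>)\<in>Omega L A. \<Sum>j\<in>A. \<Sum>k\<in>A. \<epsilon> j * \<epsilon> k * t j k)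
    = real (card (Omega L A)) * real L * (real (card A) * (\<Sum>j\<in>A. t j j) - (\<Sum>j\<in>A. \<Sum>k\<in>A. t j k))
      / (real (card A) * (real (card A) - 1))"
proof -
  let ?N = "real (card A)"
  define c where "c = real (card (Omega L A)) * real L / (?N * (?N - 1))"
  have "(\<Sum>(B, \<epsilon>)\<in>Omega L A. \<Sum>j\<in>A. \<Sum>k\<in>A. \<epsilon> j * \<epsilon> k * t j k)
      = (\<Sum>p\<in>Omega L A. \<Sum>j\<in>A. \<Sum>k\<in>A. snd p j * snd p k * t j k)"
    by (simp add: case_prod_beta)
  also have "\<dots> = (\<Sum>j\<in>A. \<Sum>p\<in>Omega L A. \<Sum>k\<in>A. snd p j * snd p k * t j k)"
    by (rule sum.swap)
  also have "\<dots> = (\<Sum>j\<in>A. \<Sum>k\<in>A. \<Sum>p\<in>Omega L A. snd p j * snd p k * t j k)"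
    by (intro sum.cong refl) (rule sum.swap)
  also have "\<dots> = (\<Sum>j\<in>A. \<Sum>k\<in>A. sign_moment L A j k * t j k)"
    by (simp add: sign_moment_def sum_distrib_right case_prod_beta)
  also have "\<dots> = (\<Sum>j\<in>A. c * (?N * t j j - (\<Sum>k\<in>A. t j k)))"
  proof (rule sum.cong[OF refl])
    fix j assume j: "j \<in> A"
    have "(\<Sum>k\<in>A. sign_moment L A j k * t j k) = (\<Sum>k\<in>A. c * (?N * (if k = j then t j k else 0) - t j k))"
      using sign_moment_eq[OF assms j] by (intro sum.cong refl) (auto simp: c_def algebra_simps)
    also have "\<dots> = c * (?N * t j j - (\<Sum>k\<in>A. t j k))"
      using assms(1) j by (simp add: sum_distrib_left[symmetric] sum_subtractf)
    finally show "(\<Sum>k\<in>A. sign_moment L A j k * t j k) = c * (?N * t j j - (\<Sum>k\<in>A. t j k))" .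
  qed
  also have "\<dots> = c * (?N * (\<Sum>j\<in>A. t j j) - (\<Sum>j\<in>A. \<Sum>k\<in>A. t j k))"
    by (simp add: sum_distrib_left[symmetric] sum_subtractf)
  finally show ?thesis
    by (simp add: c_def)
qed

lemma average_over_Omega:
  assumes "bilinear b" "linear T" "finite A" "card A \<ge> 2" "Omega L A \<noteq> {}"
  shows "(\<Sum>(B, \<epsilon>)\<in>Omega L A. b (T (\<Sum>k\<in>B. \<epsilon> k *\<^sub>R x k)) (\<Sum>k\<in>B. \<epsilon> k *\<^sub>R y k))
      / real (card (Omega L A))
    = real L * (real (card A) * (\<Sum>j\<in>A. b (T (x j)) (y j)) - (\<Sum>j\<in>A. \<Sum>k\<in>A. b (T (x j)) (y k)))
      / (real (card A) * (real (card A) - 1))"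
proof -
  have "b (T (\<Sum>k\<in>B. \<epsilon> k *\<^sub>R x k)) (\<Sum>k\<in>B. \<epsilon> k *\<^sub>R y k)
      = (\<Sum>j\<in>A. \<Sum>k\<in>A. \<epsilon> j * \<epsilon> k * b (T (x j)) (y k))" if "(B, \<epsilon>) \<in> Omega L A" for B \<epsilon>
    using bilinear_linear_sum_scaleR[OF assms(1,2), where c = \<epsilon> and A = A]
    by (simp add: Omega_sum_extend[OF that assms(3)])
  then have "(\<Sum>(B, \<epsilon>)\<in>Omega L A. b (T (\<Sum>k\<in>B. \<epsilon> k *\<^sub>R x k)) (\<Sum>k\<in>B. \<epsilon> k *\<^sub>R y k))
      = (\<Sum>(B, \<epsilon>)\<in>Omega L A. \<Sum>j\<in>A. \<Sum>k\<in>A. \<epsilon> j * \<epsilon> k * b (T (x j)) (y k))"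
    by (intro sum.cong refl) auto
  also have "\<dots> = real (card (Omega L A)) * real L * (real (card A) * (\<Sum>j\<in>A. b (T (x j)) (y j))
      - (\<Sum>j\<in>A. \<Sum>k\<in>A. b (T (x j)) (y k))) / (real (card A) * (real (card A) - 1))"
    by (rule sum_Omega_quadratic_form[OF assms(3,4)])
  finally show ?thesis
    using assms(3,5) finite_Omega by (simp add: card_gt_0_iff)
qed

lemma ex_ge_average:
  fixes g :: "'a \<Rightarrow> real"
  assumes "finite P" "P \<noteq> {}" "c \<le> sum g P / card P"
  shows "\<exists>p\<in>P. c \<le> g p"
proof (rule ccontr)
  assume "\<not> ?thesis"
  then have "sum g P < sum (\<lambda>_. c) P"
    using assms(1,2) by (intro sum_strict_mono) auto
  with assms show False
    by (simp add: le_divide_eq card_gt_0_iff mult.commute)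
qed

lemma average_lower_bound:
  fixes N \<delta> \<kappa> K D S :: real
  assumes "N > 1" "\<delta> \<ge> 0" "N * \<delta> \<le> D" "S \<le> N * K" "K \<le> \<kappa> * \<delta> * (N - 1)"
  shows "(1 - \<kappa>) * \<delta> \<le> (N * D - S) / (N * (N - 1))"
proof -
  have "N * (N * \<delta>) \<le> N * D" "N * K \<le> N * (\<kappa> * \<delta> * (N - 1))" "N * \<delta> \<ge> 0"
    using assms by simp_all
  then have "(1 - \<kappa>) * \<delta> * (N * (N - 1)) \<le> N * D - S"
    using assms(4) by (simp add: algebra_simps)
  then show ?thesis
    using assms(1) by (simp add: le_divide_eq)
qed

text \<open>The paper's threshold for N is generous: the argument only needs
  \<open>2 Cs\<^sup>2 Cu \<parallel>T\<parallel> \<le> \<kappa> \<delta> (N - 1)\<close>.\<close>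

lemma threshold_bound:
  fixes Cd Cu Cs \<tau> \<delta> \<kappa> :: real and N :: nat
  assumes "0 < \<kappa>" "\<kappa> \<le> 1" "0 < \<delta>" "\<delta> \<le> Cd * \<tau>" "1 \<le> Cd" "1 \<le> Cs" "0 \<le> Cu"
    and N: "N \<ge> 1 + nat \<lceil>2 * Cd\<^sup>2 * Cu * Cs^3 * \<tau>\<^sup>2 / (\<kappa>\<^sup>2 * \<delta>\<^sup>2)\<rceil>"
  shows "2 * Cs\<^sup>2 * Cu * \<tau> \<le> \<kappa> * \<delta> * (real N - 1)"
proof -
  define K where "K = 2 * Cs\<^sup>2 * Cu * \<tau>"
  define X where "X = 2 * Cd\<^sup>2 * Cu * Cs^3 * \<tau>\<^sup>2 / (\<kappa>\<^sup>2 * \<delta>\<^sup>2)"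
  have "0 \<le> \<tau>"
    using assms(3-5) by (smt (verit) mult_nonneg_nonpos)
  then have "0 \<le> K"
    using assms(6,7) by (simp add: K_def)
  have "X \<le> real N - 1"
    using N real_nat_ceiling_ge[of X] unfolding X_def by linarith
  have "\<kappa> * \<delta> \<le> Cd\<^sup>2 * Cs * \<tau>"
  proof -
    have "\<kappa> * \<delta> \<le> Cd * \<tau>"
      using assms(1-4) by (smt (verit) mult_left_le_one_le)
    also have "\<dots> \<le> Cd\<^sup>2 * Cs * \<tau>"
    proof (rule mult_right_mono)
      have "1 \<le> Cd * Cs"
        using mult_mono[of 1 Cd 1 Cs] assms(5,6) by simp
      then show "Cd \<le> Cd\<^sup>2 * Cs"
        using mult_left_mono[of 1 "Cd * Cs" Cd] assms(5) by (simp add: power2_eq_square mult.assoc)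
    qed fact
    finally show ?thesis .
  qed
  then have "K * (\<kappa> * \<delta>) \<le> K * (Cd\<^sup>2 * Cs * \<tau>)"
    using \<open>0 \<le> K\<close> by (rule mult_left_mono)
  also have "\<dots> = (\<kappa> * \<delta>) * X * (\<kappa> * \<delta>)"
    using assms(1,3) by (simp add: K_def X_def field_simps power2_eq_square power3_eq_cube)
  also have "\<dots> \<le> (\<kappa> * \<delta>) * (real N - 1) * (\<kappa> * \<delta>)"
    using \<open>X \<le> real N - 1\<close> assms(1,3) by (intro mult_right_mono mult_left_mono) simp_all
  finally show ?thesis
    using assms(1,3) by (simp add: K_def mult_ac)
qed

theorem proposition3p3:
  fixes b :: "'x::banach \<Rightarrow> 'y::banach \<Rightarrow> real"
    and e :: "nat \<Rightarrow> 'x" and f :: "nat \<Rightarrow> 'y"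
    and Cd Cu Cs \<kappa> :: real and T :: "'x \<Rightarrow> 'x" and L N :: nat and A :: "nat set"
  assumes B: "dual_pair_basis b Cd e f"
    and sub: "subsymmetric b Cu Cs e"
    and T: "bounded_linear T"
    and delta_pos: "(INF j. b (T (e j)) (f j)) > 0"
    and L: "even L" "L > 0"
    and kappa: "0 < \<kappa>" "\<kappa> < 1"
    and N: "N = max L (1 + nat \<lceil>2 * Cd^2 * Cu * Cs^3 * (onorm T)^2
                    / (\<kappa>^2 * (INF j. b (T (e j)) (f j))^2)\<rceil>)"
    and A: "finite A" "card A = N"
  shows "(\<Sum>(B, \<epsilon>)\<in>Omega L A. b (T (\<Sum>k\<in>B. \<epsilon> k *\<^sub>R e k)) (\<Sum>k\<in>B. \<epsilon> k *\<^sub>R f k))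
           / real (card (Omega L A))
         \<ge> (1 - \<kappa>) * (INF j. b (T (e j)) (f j)) * real L
    \<and> (\<exists>B \<epsilon>. B \<subseteq> A \<and> card B = L \<and> \<epsilon> \<in> signs_E B \<and>
         b (T (\<Sum>k\<in>B. \<epsilon> k *\<^sub>R e k)) (\<Sum>k\<in>B. \<epsilon> k *\<^sub>R f k)
           \<ge> (1 - \<kappa>) * (INF j. b (T (e j)) (f j)) * real L)"
proof -
  interpret subsymmetric_basis b Cd e f Cu Cs
    using B sub by (simp add: subsymmetric_basis_def subsymmetric_basis_axioms_def dual_basis_def)
  define \<delta> where "\<delta> = (INF j. b (T (e j)) (f j))"
  define D where "D = (\<Sum>j\<in>A. b (T (e j)) (f j))"
  define S where "S = (\<Sum>j\<in>A. \<Sum>k\<in>A. b (T (e j)) (f k))"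
  have "2 \<le> L"
    using L by presburger
  then have card_A: "2 \<le> card A" "L \<le> card A"
    using A(2) N by auto
  have Omega_finite_nonempty: "finite (Omega L A)" "Omega L A \<noteq> {}"
    using finite_Omega[OF A(1)] Omega_nonempty[OF A(1) card_A(2) L(1)] by auto
  have "real N * \<delta> \<le> D"
    using sum_mono[of A "\<lambda>_. \<delta>"] INF_diag_le[OF T] A by (simp add: \<delta>_def D_def)
  moreover have "S \<le> real N * (2 * Cs\<^sup>2 * Cu * onorm T)"
    using abs_sum_matrix_le[OF T A(1)] A(2) by (simp add: S_def mult_ac abs_le_iff)
  moreover have "2 * Cs\<^sup>2 * Cu * onorm T \<le> \<kappa> * \<delta> * (real N - 1)"
    using kappa delta_pos INF_diag_le[OF T, of 0] abs_matrix_entry_le[OF T, of 0 0] N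
      Cd_ge_1 Cs_ge_1 Cu_ge_1 by (intro threshold_bound) (auto simp: \<delta>_def)
  ultimately have bound: "(1 - \<kappa>) * \<delta> \<le> (real N * D - S) / (real N * (real N - 1))"
    using card_A A(2) delta_pos by (intro average_lower_bound) (auto simp: \<delta>_def)
  have "(\<Sum>(B, \<epsilon>)\<in>Omega L A. b (T (\<Sum>k\<in>B. \<epsilon> k *\<^sub>R e k)) (\<Sum>k\<in>B. \<epsilon> k *\<^sub>R f k))
      / real (card (Omega L A)) = (real N * D - S) / (real N * (real N - 1)) * real L"
    using average_over_Omega[OF bilinear bounded_linear.linear[OF T] A(1) card_A(1) Omega_finite_nonempty(2)]
    by (simp add: A(2) D_def S_def mult.commute)
  then have average: "(1 - \<kappa>) * \<delta> * real L
      \<le> (\<Sum>(B, \<epsilon>)\<in>Omega L A. b (T (\<Sum>k\<in>B. \<epsilon> k *\<^sub>R e k)) (\<Sum>k\<in>B. \<epsilon> k *\<^sub>R f k))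
        / real (card (Omega L A))"
    using mult_right_mono[OF bound, of "real L"] by simp
  then show ?thesis
    using ex_ge_average[OF Omega_finite_nonempty average] by (auto simp: Omega_def \<delta>_def)
qed

end
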